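(* Let $t \geq 4$ be an integer and let $G$ be a finite, simple, connected graph that contains no hole of length at least $t$. Then $t-3$ cops have a winning strategy in the game of cops and robbers on $G$; that is, $c(G) \leq t-3$.
   Context: A hole in a graph is an induced cycle of length at least $4$. The game of cops and robbers on a graph $G$ with $k$ cops is played as follows: each cop chooses a starting vertex, then the single robber chooses a starting vertex; then the players alternate turns, starting with the cops. On the cops' turn, each cop either stays on its vertex or moves to an adjacent vertex; on the robber's turn, the robber stays on his vertex or moves to an adjacent vertex. Both sides have full information. The cops win if at some point a cop occupies the same vertex as the robber; the robber wins if he avoids capture forever. The cop number $c(G)$ is the minimum $k$ such that $k$ cops have a winning strategy on $G$. All graphs are finite, simple and connected. *)

theory Defs
  imports Main
begin

definition finite_simple_graph :: "'a set \<Rightarrow> ('a \<Rightarrow> 'a \<Rightarrow> bool) \<Rightarrow> bool" where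
  "finite_simple_graph V E \<longleftrightarrow> finite V \<and> V \<noteq> {} \<and>
     (\<forall>x y. E x y \<longrightarrow> x \<in> V \<and> y \<in> V) \<and>
     (\<forall>x y. E x y \<longrightarrow> E y x) \<and> (\<forall>x. \<not> E x x)"

definition connected_graph :: "'a set \<Rightarrow> ('a \<Rightarrow> 'a \<Rightarrow> bool) \<Rightarrow> bool" where
  "connected_graph V E \<longleftrightarrow> (\<forall>u\<in>V. \<forall>v\<in>V. E\<^sup>*\<^sup>* u v)"

text \<open>A hole: an induced cycle of length at least 4, given as the cyclic list of its
(distinct) vertices; two vertices of the list are adjacent iff they are cyclically
consecutive.\<close>

definition hole :: "'a set \<Rightarrow> ('a \<Rightarrow> 'a \<Rightarrow> bool) \<Rightarrow> 'a list \<Rightarrow> bool" where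
  "hole V E vs \<longleftrightarrow> length vs \<ge> 4 \<and> distinct vs \<and> set vs \<subseteq> V \<and>
     (\<forall>i<length vs. \<forall>j<length vs.
        E (vs ! i) (vs ! j) \<longleftrightarrow> (j = Suc i mod length vs \<or> i = Suc j mod length vs))"

text \<open>A cop configuration is a list of the cops' positions
(one entry per cop). A cop strategy consists of an initial placement and a function
which, given the history of cop configurations C_0..C_n and robber positions R_0..R_n,
returns the next cop configuration C_{n+1}. Play order: C_0, R_0, C_1, R_1, ...\<close>

definition cop_step :: "('a \<Rightarrow> 'a \<Rightarrow> bool) \<Rightarrow> 'a list \<Rightarrow> 'a list \<Rightarrow> bool" where
  "cop_step E c c' \<longleftrightarrow> length c' = length c \<and>
     (\<forall>i<length c. c' ! i = c ! i \<or> E (c ! i) (c' ! i))"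

definition robber_walk :: "'a set \<Rightarrow> ('a \<Rightarrow> 'a \<Rightarrow> bool) \<Rightarrow> (nat \<Rightarrow> 'a) \<Rightarrow> bool" where
  "robber_walk V E R \<longleftrightarrow> R 0 \<in> V \<and> (\<forall>n. R (Suc n) = R n \<or> E (R n) (R (Suc n)))"

primrec cop_hist :: "'a list \<Rightarrow> ('a list list \<Rightarrow> 'a list \<Rightarrow> 'a list) \<Rightarrow> (nat \<Rightarrow> 'a) \<Rightarrow> nat \<Rightarrow> 'a list list" where
  "cop_hist C0 f R 0 = [C0]"
| "cop_hist C0 f R (Suc n) = cop_hist C0 f R n @ [f (cop_hist C0 f R n) (map R [0..<Suc n])]"

definition cop_pos :: "'a list \<Rightarrow> ('a list list \<Rightarrow> 'a list \<Rightarrow> 'a list) \<Rightarrow> (nat \<Rightarrow> 'a) \<Rightarrow> nat \<Rightarrow> 'a list" where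
  "cop_pos C0 f R n = cop_hist C0 f R n ! n"

text \<open>k cops have a winning strategy: there is a legal strategy for k cops such that,
against every legal robber behaviour (start vertex and moves, chosen with full
information), the robber is caught at some point (after a robber move/start, or
after a cop move).\<close>

definition cops_win :: "'a set \<Rightarrow> ('a \<Rightarrow> 'a \<Rightarrow> bool) \<Rightarrow> nat \<Rightarrow> bool" where
  "cops_win V E k \<longleftrightarrow> (\<exists>C0 f. length C0 = k \<and> set C0 \<subseteq> V \<and>
     (\<forall>R. robber_walk V E R \<longrightarrow>
        (\<forall>n. cop_step E (cop_pos C0 f R n) (cop_pos C0 f R (Suc n))) \<and>
        (\<exists>n. R n \<in> set (cop_pos C0 f R n) \<or> R n \<in> set (cop_pos C0 f R (Suc n)))))"

definition cop_number :: "'a set \<Rightarrow> ('a \<Rightarrow> 'a \<Rightarrow> bool) \<Rightarrow> nat" where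
  "cop_number V E = (LEAST k. cops_win V E k)"

end

theory Submission
  imports Defs
begin

text \<open>
  Let k = t - 3. The cops always stand on an induced path Q with at most k vertices, and the
  robber is confined to his territory: the component T of G - N[Q] containing him. Every vertex
  outside T with a neighbour in T lies in N[Q]; call these vertices the boundary of T. If some
  boundary vertex b is adjacent to the last vertex of Q only, the cops append b to Q, or, when Q
  already has k vertices, append b and drop the first vertex; otherwise they drop the last vertex.
  In each case the whole boundary stays in the closed neighbourhood of the new path, so the
  robber's next territory lies inside T. For the shift this is where holes come in: a boundary
  vertex y that sees only the first vertex of Q and is neither b nor adjacent to b closes, together
  with a shortest b-y path through T, a hole of length at least k + 3 = t. Hence the potential
  (k + 1) |T| + |Q| drops in every round, and the robber is eventually caught.
\<close>

lemma nth_mem_butlast: "i < length xs - 1 \<Longrightarrow> xs ! i \<in> set (butlast xs)"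
  using nth_mem[of i "butlast xs"] by (simp add: nth_butlast)

lemma nth_mem_tl: "0 < i \<Longrightarrow> i < length xs \<Longrightarrow> xs ! i \<in> set (tl xs)"
  using nth_mem[of "i - 1" "tl xs"] by (simp add: nth_tl)

lemma set_butlast_last: "xs \<noteq> [] \<Longrightarrow> set xs = insert (last xs) (set (butlast xs))"
  by (cases xs rule: rev_cases) auto

lemma set_hd_tl: "xs \<noteq> [] \<Longrightarrow> set xs = insert (hd xs) (set (tl xs))"
  by (cases xs) auto

lemma set_tl_subset: "set (tl xs) \<subseteq> set xs"
  by (cases xs) auto

lemma index_first_last_cases:
  fixes a n :: nat
  assumes "a < n"
  obtains "a = 0" | "a = n - 1" | "0 < a" "a < n - 1"
proof (cases "a = 0 \<or> a = n - 1")
  case False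
  then have "0 < a" "a < n - 1" using assms by arith+
  with that(3) show thesis .
qed (use that in blast)

lemma successively_take_Suc_append_drop:
  assumes "successively R P" "i < l" "l < length P" "R (P ! i) (P ! l)"
  shows "successively R (take (Suc i) P @ drop l P)"
proof -
  have "successively R (take (Suc i) P)" "successively R (drop l P)"
    using assms(1) by (auto simp: successively_conv_nth)
  moreover have "last (take (Suc i) P) = P ! i" "hd (drop l P) = P ! l"
    using assms(2,3) less_trans[OF assms(2,3)] by (simp_all add: take_Suc_conv_app_nth hd_drop_conv_nth)
  ultimately show ?thesis using assms(4) by (simp add: successively_append_iff)
qed

lemma rtranclp_imp_walk:
  assumes "R\<^sup>*\<^sup>* x z"
  shows "\<exists>w. w \<noteq> [] \<and> hd w = x \<and> last w = z \<and> successively R w \<and> set w \<subseteq> {v. R\<^sup>*\<^sup>* x v}"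
  using assms
proof (induction rule: converse_rtranclp_induct)
  case base
  then show ?case by (intro exI[of _ "[z]"]) auto
next
  case (step x u)
  then obtain w where
    "w \<noteq> []" "hd w = u" "last w = z" "successively R w" "set w \<subseteq> {v. R\<^sup>*\<^sup>* u v}"
    by blast
  with step.hyps(1) show ?case
    by (intro exI[of _ "x # w"]) (auto simp: successively_Cons intro: converse_rtranclp_into_rtranclp)
qed

section \<open>Cop strategies\<close>

lemma length_cop_hist: "length (cop_hist C0 f R n) = Suc n"
  by (induction n) auto

lemma cop_pos_Suc: "cop_pos C0 f R (Suc n) = f (cop_hist C0 f R n) (map R [0..<Suc n])"
  unfolding cop_pos_def using length_cop_hist[of C0 f R n] by (simp add: nth_append)

lemma last_cop_hist: "last (cop_hist C0 f R n) = cop_pos C0 f R n"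
  unfolding cop_pos_def using length_cop_hist[of C0 f R n]
  by (metis diff_Suc_1 last_conv_nth list.size(3) nat.distinct(1))

definition closed_nbhd :: "('a \<Rightarrow> 'a \<Rightarrow> bool) \<Rightarrow> 'a set \<Rightarrow> 'a set" where
  "closed_nbhd E S = S \<union> {x. \<exists>s\<in>S. E s x}"

lemma closed_nbhd_mono: "S \<subseteq> S' \<Longrightarrow> closed_nbhd E S \<subseteq> closed_nbhd E S'"
  unfolding closed_nbhd_def by blast

lemma cop_step_refl: "cop_step E c c"
  unfolding cop_step_def by simp

lemma cop_step_capture:
  assumes "r \<in> closed_nbhd E (set c)"
  shows "\<exists>c'. cop_step E c c' \<and> r \<in> set c'"
proof (cases "r \<in> set c")
  case True
  then show ?thesis using cop_step_refl by blast
next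
  case False
  then obtain i where i: "i < length c" "E (c ! i) r"
    using assms by (auto simp: closed_nbhd_def in_set_conv_nth)
  then have "cop_step E c (c[i := r])"
    unfolding cop_step_def by (auto simp: nth_list_update)
  moreover have "r \<in> set (c[i := r])" using i by (simp add: set_update_memI)
  ultimately show ?thesis by blast
qed

lemma cops_win_by_potential:
  fixes Inv :: "'a list \<Rightarrow> 'a \<Rightarrow> bool" and \<mu> :: "'a list \<Rightarrow> 'a \<Rightarrow> nat"
  assumes start: "length C = k" "set C \<subseteq> V"
    and init: "\<And>r. r \<in> V \<Longrightarrow> r \<notin> closed_nbhd E (set C) \<Longrightarrow> Inv C r"
    and progress: "\<And>c r. Inv c r \<Longrightarrow> r \<notin> closed_nbhd E (set c) \<Longrightarrow>
       \<exists>c'. cop_step E c c' \<and> (\<forall>r'. (r' = r \<or> E r r') \<longrightarrow> r' \<notin> closed_nbhd E (set c') \<longrightarrow>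
                                   Inv c' r' \<and> \<mu> c' r' < \<mu> c r)"
  shows "cops_win V E k"
proof -
  define good_reply where "good_reply c r c' \<longleftrightarrow> cop_step E c c' \<and>
      (r \<in> closed_nbhd E (set c) \<longrightarrow> r \<in> set c') \<and>
      (Inv c r \<and> r \<notin> closed_nbhd E (set c) \<longrightarrow>
         (\<forall>r'. (r' = r \<or> E r r') \<longrightarrow> r' \<notin> closed_nbhd E (set c') \<longrightarrow>
                Inv c' r' \<and> \<mu> c' r' < \<mu> c r))" for c r c'
  have "\<exists>c'. good_reply c r c'" for c r
    using cop_step_capture[of r E c] progress[of c r] cop_step_refl[of E c]
    unfolding good_reply_def by blast
  then have reply: "good_reply c r (SOME c'. good_reply c r c')" for c r
    by (rule someI_ex)
  define f where "f h rs = (SOME c'. good_reply (last h) (last rs) c')" for h and rs :: "'a list"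
  show ?thesis unfolding cops_win_def
  proof (intro exI[of _ C] exI[of _ f] conjI allI impI)
    fix R assume walk: "robber_walk V E R"
    define c where "c = cop_pos C f R"
    have c_Suc: "good_reply (c n) (R n) (c (Suc n))" for n
      using reply unfolding c_def f_def by (simp add: cop_pos_Suc last_cop_hist)
    then show "cop_step E (cop_pos C f R n) (cop_pos C f R (Suc n))" for n
      unfolding c_def good_reply_def by blast
    show "\<exists>n. R n \<in> set (cop_pos C f R n) \<or> R n \<in> set (cop_pos C f R (Suc n))"
    proof (rule ccontr)
      assume escape: "\<not> ?thesis"
      have free: "R n \<notin> closed_nbhd E (set (c n))" for n
        using c_Suc[of n] escape unfolding good_reply_def c_def by blast
      have "Inv (c n) (R n) \<and> \<mu> (c n) (R n) + n \<le> \<mu> (c 0) (R 0)" for n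
      proof (induction n)
        case 0
        have "c 0 = C" by (simp add: c_def cop_pos_def)
        then show ?case using init free[of 0] walk unfolding robber_walk_def by simp
      next
        case (Suc n)
        have "R (Suc n) = R n \<or> E (R n) (R (Suc n))"
          using walk unfolding robber_walk_def by blast
        then show ?case
          using Suc c_Suc[of n] free[of n] free[of "Suc n"] unfolding good_reply_def by fastforce
      qed
      then show False by (metis add_leD2 not_less_eq_eq)
    qed
  qed (use start in auto)
qed

section \<open>Induced paths and holes\<close>

locale simple_graph =
  fixes V :: "'a set" and E :: "'a \<Rightarrow> 'a \<Rightarrow> bool"
  assumes simple: "finite_simple_graph V E"
begin

lemma edge_sym: "E x y \<Longrightarrow> E y x"
  using simple unfolding finite_simple_graph_def by blast

lemma edge_irrefl: "\<not> E x x"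
  using simple unfolding finite_simple_graph_def by blast

lemma edge_sym_iff: "E x y \<longleftrightarrow> E y x"
  using edge_sym by blast

lemma edge_in_V: "E x y \<Longrightarrow> x \<in> V \<and> y \<in> V"
  using simple unfolding finite_simple_graph_def by blast

lemma finite_V: "finite V"
  using simple unfolding finite_simple_graph_def by blast

definition induced_path :: "'a list \<Rightarrow> bool" where
  "induced_path P \<longleftrightarrow> distinct P \<and>
     (\<forall>i<length P. \<forall>l<length P. E (P ! i) (P ! l) \<longleftrightarrow> (l = Suc i \<or> i = Suc l))"

lemma induced_path_successively: "induced_path P \<Longrightarrow> successively E P"
  unfolding induced_path_def successively_conv_nth by auto

lemma induced_path_butlast: "induced_path P \<Longrightarrow> induced_path (butlast P)"
  unfolding induced_path_def by (auto simp: nth_butlast distinct_butlast)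

lemma induced_path_tl:
  assumes "induced_path P"
  shows "induced_path (tl P)"
  unfolding induced_path_def
proof (intro conjI allI impI)
  show "distinct (tl P)" using assms by (simp add: induced_path_def distinct_tl)
  fix i l assume il: "i < length (tl P)" "l < length (tl P)"
  then have "E (P ! Suc i) (P ! Suc l) \<longleftrightarrow> (Suc l = Suc (Suc i) \<or> Suc i = Suc (Suc l))"
    using assms unfolding induced_path_def by simp
  then show "E (tl P ! i) (tl P ! l) \<longleftrightarrow> (l = Suc i \<or> i = Suc l)" using il by (simp add: nth_tl)
qed

lemma induced_path_snoc:
  assumes P: "induced_path P" and b: "b \<notin> set P" "P \<noteq> [] \<Longrightarrow> E (last P) b"
    "\<forall>v\<in>set (butlast P). \<not> E v b"
  shows "induced_path (P @ [b])"
proof -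
  have nbr: "E (P ! i) b \<longleftrightarrow> Suc i = length P" if "i < length P" for i
  proof (cases "Suc i = length P")
    case True
    then have "P \<noteq> []" "i = length P - 1" by auto
    then show ?thesis using b(2) True by (simp add: last_conv_nth)
  next
    case False
    then have "P ! i \<in> set (butlast P)"
      using that nth_mem_butlast[of i P] by simp
    then show ?thesis using b(3) False by blast
  qed
  have "E ((P @ [b]) ! i) ((P @ [b]) ! l) \<longleftrightarrow> (l = Suc i \<or> i = Suc l)"
    if il: "i < Suc (length P)" "l < Suc (length P)" for i l
  proof -
    consider "i < length P" "l < length P" | "i < length P" "l = length P"
      | "i = length P" "l < length P" | "i = length P" "l = length P"
      using il by (auto simp: less_Suc_eq)
    then show ?thesis
    proof cases
      case 1
      then show ?thesis using P unfolding induced_path_def by (simp add: nth_append)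
    next
      case 2
      then show ?thesis using nbr[of i] by (auto simp: nth_append)
    next
      case 3
      then show ?thesis using nbr[of l] edge_sym_iff[of b "P ! l"] by (auto simp: nth_append)
    next
      case 4
      then show ?thesis using edge_irrefl by simp
    qed
  qed
  then show ?thesis using P b(1) unfolding induced_path_def by simp
qed

lemma walk_contains_induced_path:
  assumes "successively E W" "W \<noteq> []"
  obtains P where "induced_path P" "P \<noteq> []" "hd P = hd W" "last P = last W" "set P \<subseteq> set W"
proof -
  define walk where "walk P \<longleftrightarrow> successively E P \<and> P \<noteq> [] \<and> hd P = hd W \<and> last P = last W \<and>
     set P \<subseteq> set W" for P
  obtain P where P: "walk P" and shortest: "\<And>P'. walk P' \<Longrightarrow> length P \<le> length P'"
    using ex_has_least_nat[of walk W length] assms unfolding walk_def by blast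
  have no_chord: "\<not> E (P ! i) (P ! l)" if "Suc i < l" "l < length P" for i l
  proof
    assume "E (P ! i) (P ! l)"
    then have "walk (take (Suc i) P @ drop l P)"
      using P that successively_take_Suc_append_drop[of E P i l] set_take_subset[of "Suc i" P]
        set_drop_subset[of l P]
      unfolding walk_def by auto
    then show False using shortest that by fastforce
  qed
  have no_repeat: "P ! i \<noteq> P ! l" if "i < l" "l < length P" for i l
  proof
    assume eq: "P ! i = P ! l"
    show False
    proof (cases i)
      case 0
      have "walk (drop l P)"
        using P that eq 0 set_drop_subset[of l P]
        unfolding walk_def by (auto simp: successively_conv_nth hd_drop_conv_nth hd_conv_nth)
      then show False using shortest that by fastforce
    next
      case (Suc i')
      then have "E (P ! i') (P ! l)"
        using P that eq successively_nth[of E P i'] unfolding walk_def by auto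
      then show False using no_chord[of i' l] Suc that by simp
    qed
  qed
  have "induced_path P"
    unfolding induced_path_def distinct_conv_nth
  proof (intro conjI allI impI)
    fix i l assume il: "i < length P" "l < length P"
    show "i \<noteq> l \<Longrightarrow> P ! i \<noteq> P ! l" using no_repeat il by (metis linorder_neqE_nat)
    show "E (P ! i) (P ! l) \<longleftrightarrow> (l = Suc i \<or> i = Suc l)"
      using il no_chord[of i l] no_chord[of l i] P edge_sym edge_irrefl successively_nth[of E P]
      unfolding walk_def by (metis Suc_lessI linorder_neqE_nat)
  qed
  then show thesis using that P unfolding walk_def by blast
qed

lemma hole_append:
  assumes P: "induced_path P" "3 \<le> length P" "set P \<subseteq> V"
    and Q: "induced_path Q" "Q \<noteq> []" "set Q \<subseteq> V"
    and disjoint: "set P \<inter> set Q = {}"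
    and cross: "\<And>a c. a < length P \<Longrightarrow> c < length Q \<Longrightarrow>
       E (P ! a) (Q ! c) \<longleftrightarrow> (a = length P - 1 \<and> c = 0) \<or> (a = 0 \<and> c = length Q - 1)"
  shows "hole V E (P @ Q)"
proof -
  define p q where "p = length P" and "q = length Q"
  have q: "q \<ge> 1" using Q(2) by (simp add: q_def Suc_le_eq)
  have mod_Suc: "Suc x mod (p + q) = (if Suc x = p + q then 0 else Suc x)" if "x < p + q" for x
    using that by auto
  have "E ((P @ Q) ! i) ((P @ Q) ! l) \<longleftrightarrow> (l = Suc i mod (p + q) \<or> i = Suc l mod (p + q))"
    if il: "i < p + q" "l < p + q" for i l
  proof -
    consider "i < p" "l < p" | "i < p" "p \<le> l" | "p \<le> i" "l < p" | "p \<le> i" "p \<le> l"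
      by linarith
    then show ?thesis
    proof cases
      case 1
      then show ?thesis using P(1) P(2) q mod_Suc il unfolding induced_path_def p_def
        by (simp add: nth_append)
    next
      case 2
      then show ?thesis using cross[of i "l - p"] il mod_Suc P(2) q
        by (auto simp: nth_append p_def q_def)
    next
      case 3
      then have "(P @ Q) ! i = Q ! (i - p)" "(P @ Q) ! l = P ! l"
        by (simp_all add: nth_append p_def)
      then have "E ((P @ Q) ! i) ((P @ Q) ! l) \<longleftrightarrow> E (P ! l) (Q ! (i - p))"
        by (metis edge_sym_iff)
      then show ?thesis using 3 cross[of l "i - p"] il mod_Suc P(2) q
        by (auto simp: p_def q_def)
    next
      case 4
      then show ?thesis using Q(1) il mod_Suc P(2) q unfolding induced_path_def
        by (auto simp: nth_append p_def q_def)
    qed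
  qed
  then show ?thesis
    using P Q disjoint q unfolding hole_def induced_path_def by (auto simp: p_def q_def)
qed

section \<open>The robber territory\<close>

definition free_edge :: "'a set \<Rightarrow> 'a \<Rightarrow> 'a \<Rightarrow> bool" where
  "free_edge S u v \<longleftrightarrow> E u v \<and> u \<notin> closed_nbhd E S \<and> v \<notin> closed_nbhd E S"

text \<open>For r outside N[S], territory S r is the component of G - N[S] containing r.\<close>

definition territory :: "'a set \<Rightarrow> 'a \<Rightarrow> 'a set" where
  "territory S r = {x. (free_edge S)\<^sup>*\<^sup>* r x}"

definition boundary :: "'a set \<Rightarrow> 'a \<Rightarrow> 'a set" where
  "boundary S r = {y. y \<notin> territory S r \<and> (\<exists>x\<in>territory S r. E x y)}"

lemma territory_refl: "r \<in> territory S r"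
  unfolding territory_def by simp

lemma territory_avoids_nbhd:
  assumes "r \<notin> closed_nbhd E S" "x \<in> territory S r"
  shows "x \<notin> closed_nbhd E S"
  using assms unfolding territory_def
  by (auto elim: rtranclp.cases simp: free_edge_def)

lemma territory_subset_V:
  assumes "r \<in> V"
  shows "territory S r \<subseteq> V"
proof
  fix x assume "x \<in> territory S r"
  then have "(free_edge S)\<^sup>*\<^sup>* r x" by (simp add: territory_def)
  then show "x \<in> V"
    using assms by (induction rule: rtranclp_induct) (auto simp: free_edge_def dest: edge_in_V)
qed

lemma finite_territory: "r \<in> V \<Longrightarrow> finite (territory S r)"
  using territory_subset_V finite_V by (rule finite_subset)

lemma boundary_subset_V: "boundary S r \<subseteq> V"
  unfolding boundary_def using edge_in_V by blast

lemma boundary_subset_nbhd: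
  assumes "r \<notin> closed_nbhd E S"
  shows "boundary S r \<subseteq> closed_nbhd E S - S"
proof
  fix y assume "y \<in> boundary S r"
  then obtain x where x: "x \<in> territory S r" "E x y" "y \<notin> territory S r"
    unfolding boundary_def by blast
  have "x \<notin> closed_nbhd E S" using territory_avoids_nbhd[OF assms x(1)] .
  moreover have "y \<in> closed_nbhd E S"
  proof (rule ccontr)
    assume "y \<notin> closed_nbhd E S"
    with x \<open>x \<notin> closed_nbhd E S\<close> have "y \<in> territory S r"
      unfolding territory_def by (auto simp: free_edge_def intro: rtranclp.rtrancl_into_rtrancl)
    with x(3) show False by contradiction
  qed
  ultimately show "y \<in> closed_nbhd E S - S"
    using x(2) edge_sym unfolding closed_nbhd_def by blast
qed

lemma boundary_nonempty:
  assumes "r \<notin> closed_nbhd E S" "s \<in> S" "E\<^sup>*\<^sup>* r s"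
  shows "boundary S r \<noteq> {}"
proof -
  have "s \<notin> territory S r"
    using territory_avoids_nbhd[OF assms(1)] assms(2) unfolding closed_nbhd_def by blast
  have "\<exists>x\<in>territory S r. \<exists>y. E x y \<and> y \<notin> territory S r"
    if "E\<^sup>*\<^sup>* x z" "x \<in> territory S r" "z \<notin> territory S r" for x z
    using that by (induction rule: rtranclp_induct) auto
  then show ?thesis
    using assms(3) territory_refl \<open>s \<notin> territory S r\<close> unfolding boundary_def by blast
qed

lemma territory_mono:
  assumes r: "r \<notin> closed_nbhd E S" and guarded: "boundary S r \<subseteq> closed_nbhd E S'"
    and r': "r' = r \<or> E r r'" "r' \<notin> closed_nbhd E S'"
  shows "territory S' r' \<subseteq> territory S r"
proof
  have stays: "z \<in> territory S r" if "y \<in> territory S r" "E y z" "z \<notin> closed_nbhd E S'" for y z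
    using that guarded unfolding boundary_def by blast
  have "r' \<in> territory S r"
    using r' territory_refl stays[of r r'] by blast
  fix x assume "x \<in> territory S' r'"
  then have "(free_edge S')\<^sup>*\<^sup>* r' x" by (simp add: territory_def)
  then show "x \<in> territory S r"
    by (induction rule: rtranclp_induct)
      (use \<open>r' \<in> territory S r\<close> stays in \<open>auto simp: free_edge_def\<close>)
qed

lemma territory_strict_mono:
  assumes r: "r \<notin> closed_nbhd E S" and guarded: "boundary S r \<subseteq> closed_nbhd E S'"
    and r': "r' = r \<or> E r r'" "r' \<notin> closed_nbhd E S'"
    and occupied: "S' \<inter> boundary S r \<noteq> {}"
  shows "territory S' r' \<subset> territory S r"
proof -
  obtain b x where "b \<in> S'" "x \<in> territory S r" "E x b"
    using occupied unfolding boundary_def by blast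
  then have "x \<in> closed_nbhd E S'"
    using edge_sym unfolding closed_nbhd_def by blast
  then have "x \<notin> territory S' r'"
    using territory_avoids_nbhd[OF r'(2)] by blast
  then show ?thesis
    using territory_mono[OF r guarded r'] \<open>x \<in> territory S r\<close> by blast
qed

lemma territory_walk:
  assumes r: "r \<notin> closed_nbhd E S" and xz: "x \<in> territory S r" "z \<in> territory S r"
  obtains w where "w \<noteq> []" "hd w = x" "last w = z" "successively E w" "set w \<subseteq> territory S r"
proof -
  have free_sym: "(free_edge S)\<inverse>\<inverse> = free_edge S"
    using edge_sym_iff unfolding free_edge_def by (auto simp: fun_eq_iff)
  have "(free_edge S)\<^sup>*\<^sup>* x r"
    using xz(1) rtranclp_converseI[of "free_edge S" r x] free_sym by (simp add: territory_def)
  then have "(free_edge S)\<^sup>*\<^sup>* x z"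
    using xz(2) by (simp add: territory_def)
  then obtain w where w: "w \<noteq> []" "hd w = x" "last w = z" "successively (free_edge S) w"
    "set w \<subseteq> {v. (free_edge S)\<^sup>*\<^sup>* x v}"
    using rtranclp_imp_walk by metis
  have "set w \<subseteq> territory S r"
    using w(5) xz(1) unfolding territory_def by (auto intro: rtranclp_trans)
  moreover have "successively E w"
    using w(4) by (rule successively_mono) (simp add: free_edge_def)
  ultimately show thesis using that w by blast
qed

lemma induced_path_through_territory:
  assumes r: "r \<in> V" "r \<notin> closed_nbhd E S"
    and ends: "b \<in> boundary S r" "y \<in> boundary S r" "y \<noteq> b" "\<not> E b y"
  obtains P where "induced_path P" "hd P = b" "last P = y" "3 \<le> length P" "set P \<subseteq> V"
    "set P \<subseteq> insert b (insert y (territory S r))"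
    "\<And>a. 0 < a \<Longrightarrow> a < length P - 1 \<Longrightarrow> P ! a \<in> territory S r"
proof -
  obtain x1 x2 where x: "x1 \<in> territory S r" "E x1 b" "x2 \<in> territory S r" "E x2 y"
    using ends(1,2) unfolding boundary_def by blast
  obtain w where w: "w \<noteq> []" "hd w = x1" "last w = x2" "successively E w" "set w \<subseteq> territory S r"
    using territory_walk[OF r(2) x(1) x(3)] .
  define W where "W = b # w @ [y]"
  have "successively E W"
    using w x edge_sym unfolding W_def by (auto simp: successively_Cons successively_append_iff)
  then obtain P where P: "induced_path P" "P \<noteq> []" "hd P = b" "last P = y" "set P \<subseteq> set W"
    using walk_contains_induced_path[of W] unfolding W_def by auto
  have ends_nth: "P ! 0 = b" "P ! (length P - 1) = y"
    using P(2-4) by (simp_all add: hd_conv_nth last_conv_nth)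
  have "length P \<noteq> 1" "length P \<noteq> 2"
    using ends_nth ends(3,4) induced_path_successively[OF P(1)] successively_nth[of E P 0] by auto
  moreover have "length P \<noteq> 0" using P(2) by simp
  ultimately have long: "3 \<le> length P" by linarith
  have "set W \<subseteq> V"
    using w(5) territory_subset_V[OF r(1), of S] ends(1,2) boundary_subset_V[of S r]
    unfolding W_def by auto
  moreover have "P ! a \<in> territory S r" if "0 < a" "a < length P - 1" for a
  proof -
    have dist: "distinct P" using P(1) unfolding induced_path_def by blast
    have idx: "a < length P" "0 < length P" "length P - 1 < length P" using that long by auto
    have "P ! a \<noteq> P ! 0" "P ! a \<noteq> P ! (length P - 1)"
      using that nth_eq_iff_index_eq[OF dist idx(1) idx(2)] nth_eq_iff_index_eq[OF dist idx(1) idx(3)]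
      by auto
    then have "P ! a \<noteq> b" "P ! a \<noteq> y" using ends_nth by simp_all
    moreover have "P ! a \<in> set W" using that P(5) by auto
    ultimately show ?thesis using w(5) unfolding W_def by auto
  qed
  moreover have "set P \<subseteq> insert b (insert y (territory S r))"
    using P(5) w(5) unfolding W_def by auto
  ultimately show thesis using that P long by blast
qed

lemma long_hole_through_boundary:
  assumes Q: "induced_path Q" "Q \<noteq> []" "set Q \<subseteq> V" and r: "r \<in> V" "r \<notin> closed_nbhd E (set Q)"
    and b: "b \<in> boundary (set Q) r" "E (last Q) b" "\<forall>v\<in>set (butlast Q). \<not> E v b"
    and y: "y \<in> boundary (set Q) r" "E (hd Q) y" "\<forall>v\<in>set (tl Q). \<not> E v y"
    and far: "y \<noteq> b" "\<not> E b y"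
  shows "\<exists>vs. hole V E vs \<and> length Q + 3 \<le> length vs"
proof -
  obtain P where P: "induced_path P" "hd P = b" "last P = y" "3 \<le> length P" "set P \<subseteq> V"
    and P_set: "set P \<subseteq> insert b (insert y (territory (set Q) r))"
    and inner: "\<And>a. 0 < a \<Longrightarrow> a < length P - 1 \<Longrightarrow> P ! a \<in> territory (set Q) r"
    using induced_path_through_territory[OF r b(1) y(1) far] by blast
  have "P \<noteq> []" using P(4) by auto
  then have ends_nth: "P ! 0 = b" "P ! (length P - 1) = y"
    using P(2,3) by (simp_all add: hd_conv_nth last_conv_nth)
  have b_nbrs: "E (Q ! c) b \<longleftrightarrow> c = length Q - 1" if "c < length Q" for c
    using b(2,3) that nth_mem_butlast[of c Q] Q(2)
    by (cases "c = length Q - 1") (auto simp: last_conv_nth)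
  have y_nbrs: "E (Q ! c) y \<longleftrightarrow> c = 0" if "c < length Q" for c
    using y(2,3) that nth_mem_tl[of c Q] Q(2)
    by (cases "c = 0") (auto simp: hd_conv_nth)
  have "set P \<inter> set Q = {}"
    using P_set boundary_subset_nbhd[OF r(2)] b(1) y(1) territory_avoids_nbhd[OF r(2)]
    unfolding closed_nbhd_def by blast
  moreover have "E (P ! a) (Q ! c) \<longleftrightarrow> (a = length P - 1 \<and> c = 0) \<or> (a = 0 \<and> c = length Q - 1)"
    if ac: "a < length P" "c < length Q" for a c
  proof (cases rule: index_first_last_cases[OF ac(1)])
    case 1
    then show ?thesis using b_nbrs[OF ac(2)] edge_sym_iff[of b "Q ! c"] ends_nth P(4) by auto
  next
    case 2
    then show ?thesis using y_nbrs[OF ac(2)] edge_sym_iff[of y "Q ! c"] ends_nth P(4) by auto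
  next
    case 3
    then have "\<not> E (Q ! c) (P ! a)"
      using territory_avoids_nbhd[OF r(2) inner[OF 3]] ac(2) unfolding closed_nbhd_def by auto
    then show ?thesis using 3 edge_sym_iff by auto
  qed
  ultimately have "hole V E (P @ Q)"
    using hole_append[OF P(1) P(4) P(5) Q] by blast
  then show ?thesis using P(4) by (intro exI[of _ "P @ Q"]) simp
qed

end

section \<open>Cops on an induced path\<close>

text \<open>A configuration of k cops occupying a path Q with at most k vertices; the surplus cops
  share the last vertex of Q.\<close>

definition path_cops :: "nat \<Rightarrow> 'a list \<Rightarrow> 'a list" where
  "path_cops k Q = map (\<lambda>i. Q ! min i (length Q - 1)) [0..<k]"

lemma length_path_cops [simp]: "length (path_cops k Q) = k"
  by (simp add: path_cops_def)

lemma nth_path_cops: "i < k \<Longrightarrow> path_cops k Q ! i = Q ! min i (length Q - 1)"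
  by (simp add: path_cops_def)

lemma set_path_cops:
  assumes "Q \<noteq> []" "length Q \<le> k"
  shows "set (path_cops k Q) = set Q"
proof
  have "min i (length Q - 1) < length Q" for i
    using assms(1) by (simp add: min_less_iff_disj)
  then show "set (path_cops k Q) \<subseteq> set Q"
    by (auto simp: path_cops_def)
  show "set Q \<subseteq> set (path_cops k Q)"
  proof
    fix x assume "x \<in> set Q"
    then obtain i where "i < length Q" "Q ! i = x" by (auto simp: in_set_conv_nth)
    then show "x \<in> set (path_cops k Q)"
      using assms(2) nth_path_cops[of i k Q] nth_mem[of i "path_cops k Q"] by simp
  qed
qed

lemma cop_step_path_cops_snoc:
  assumes "Q \<noteq> []" "length Q < k" "E (last Q) b"
  shows "cop_step E (path_cops k Q) (path_cops k (Q @ [b]))"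
  unfolding cop_step_def
proof (intro conjI allI impI)
  fix i assume "i < length (path_cops k Q)"
  then show "path_cops k (Q @ [b]) ! i = path_cops k Q ! i \<or> E (path_cops k Q ! i) (path_cops k (Q @ [b]) ! i)"
    using assms by (cases "i < length Q") (auto simp: nth_path_cops nth_append last_conv_nth min_def)
qed simp

context simple_graph
begin

lemma cop_step_path_cops_butlast:
  assumes "successively E Q" "2 \<le> length Q"
  shows "cop_step E (path_cops k Q) (path_cops k (butlast Q))"
  unfolding cop_step_def
proof (intro conjI allI impI)
  obtain m where m: "length Q = Suc (Suc m)" using assms(2) by (metis add_2_eq_Suc le_Suc_ex)
  then have "E (Q ! Suc m) (Q ! m)" using assms(1) successively_nth[of E Q m] edge_sym by simp
  moreover fix i assume "i < length (path_cops k Q)"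
  ultimately show "path_cops k (butlast Q) ! i = path_cops k Q ! i \<or>
      E (path_cops k Q ! i) (path_cops k (butlast Q) ! i)"
    using m by (cases "i \<le> m") (auto simp: nth_path_cops nth_butlast min_def le_Suc_eq)
qed simp

lemma cop_step_path_cops_shift:
  assumes "successively E Q" "length Q = k" "E (last Q) b"
  shows "cop_step E (path_cops k Q) (path_cops k (tl Q @ [b]))"
  unfolding cop_step_def
proof (intro conjI allI impI)
  fix i assume i: "i < length (path_cops k Q)"
  then obtain m where m: "length Q = Suc m" using assms(2) by (cases Q) auto
  moreover from m have "Q \<noteq> []" by auto
  ultimately have "last Q = Q ! m" by (simp add: last_conv_nth)
  then have "E (Q ! m) b" using assms(3) by simp
  show "path_cops k (tl Q @ [b]) ! i = path_cops k Q ! i \<or>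
      E (path_cops k Q ! i) (path_cops k (tl Q @ [b]) ! i)"
  proof (cases "i < m")
    case True
    then have "E (Q ! i) (Q ! Suc i)" using m assms(1) successively_nth[of E Q i] by simp
    then show ?thesis using True i m assms(2) by (simp add: nth_path_cops nth_append nth_tl)
  next
    case False
    then have "i = m" using i m assms(2) by simp
    then show ?thesis using \<open>E (Q ! m) b\<close> m assms(2) by (simp add: nth_path_cops nth_append)
  qed
qed simp

end

locale hole_bounded_graph = simple_graph +
  fixes k :: nat
  assumes connected: "connected_graph V E" and k_pos: "1 \<le> k"
    and short_holes: "\<And>vs. hole V E vs \<Longrightarrow> length vs < k + 3"
begin

definition guarding :: "'a list \<Rightarrow> 'a \<Rightarrow> bool" where
  "guarding Q r \<longleftrightarrow> induced_path Q \<and> Q \<noteq> [] \<and> length Q \<le> k \<and> set Q \<subseteq> V \<and>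
     r \<in> V \<and> r \<notin> closed_nbhd E (set Q)"

definition private_nbr :: "'a list \<Rightarrow> 'a \<Rightarrow> 'a \<Rightarrow> bool" where
  "private_nbr Q r b \<longleftrightarrow>
     b \<in> boundary (set Q) r \<and> E (last Q) b \<and> (\<forall>v\<in>set (butlast Q). \<not> E v b)"

definition guarding_move :: "'a list \<Rightarrow> 'a \<Rightarrow> 'a list \<Rightarrow> bool" where
  "guarding_move Q r Q' \<longleftrightarrow> induced_path Q' \<and> Q' \<noteq> [] \<and> length Q' \<le> k \<and> set Q' \<subseteq> V \<and>
     cop_step E (path_cops k Q) (path_cops k Q') \<and>
     boundary (set Q) r \<subseteq> closed_nbhd E (set Q') \<and>
     (length Q' < length Q \<or> set Q' \<inter> boundary (set Q) r \<noteq> {})"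

lemma boundary_adjacent_to_path:
  assumes "guarding Q r" "y \<in> boundary (set Q) r"
  obtains v where "v \<in> set Q" "E v y"
  using assms boundary_subset_nbhd[of r "set Q"] unfolding guarding_def closed_nbhd_def by blast

lemma private_nbr_of_single_vertex:
  assumes "guarding Q r" "length Q = 1"
  obtains b where "private_nbr Q r b"
proof -
  obtain v where v: "v \<in> V" "Q = [v]" using assms unfolding guarding_def by (cases Q) auto
  obtain y where y: "y \<in> boundary (set Q) r"
    using boundary_nonempty[of r "set Q" v] assms connected v
    unfolding guarding_def connected_graph_def by auto
  then show thesis
    using that boundary_adjacent_to_path[OF assms(1) y] v(2) unfolding private_nbr_def by auto
qed

lemma extend_move:
  assumes Q: "guarding Q r" "length Q < k" and b: "private_nbr Q r b"
  shows "guarding_move Q r (Q @ [b])"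
proof -
  have r: "r \<notin> closed_nbhd E (set Q)" using Q(1) unfolding guarding_def by blast
  have bB: "b \<in> boundary (set Q) r" using b unfolding private_nbr_def by blast
  then have "b \<notin> set Q" "b \<in> V"
    using boundary_subset_nbhd[OF r] boundary_subset_V by auto
  moreover have "boundary (set Q) r \<subseteq> closed_nbhd E (set (Q @ [b]))"
    using boundary_subset_nbhd[OF r] closed_nbhd_mono[of "set Q" "set (Q @ [b])" E] by auto
  ultimately show ?thesis
    using Q b bB induced_path_snoc[of Q b] cop_step_path_cops_snoc[of Q k E b]
    unfolding guarding_move_def guarding_def private_nbr_def by auto
qed

lemma retract_move:
  assumes Q: "guarding Q r" "2 \<le> length Q" and no_private: "\<nexists>b. private_nbr Q r b"
  shows "guarding_move Q r (butlast Q)"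
proof -
  have "boundary (set Q) r \<subseteq> closed_nbhd E (set (butlast Q))"
  proof
    fix y assume y: "y \<in> boundary (set Q) r"
    obtain v where v: "v \<in> set Q" "E v y" using boundary_adjacent_to_path[OF Q(1) y] .
    show "y \<in> closed_nbhd E (set (butlast Q))"
    proof (rule ccontr)
      assume "y \<notin> closed_nbhd E (set (butlast Q))"
      then have no_nbr: "\<forall>u\<in>set (butlast Q). \<not> E u y" unfolding closed_nbhd_def by blast
      have "Q \<noteq> []" using Q(2) by auto
      then have "v = last Q \<or> v \<in> set (butlast Q)"
        using v(1) set_butlast_last[of Q] by blast
      then have "v = last Q" using v(2) no_nbr by blast
      then have "private_nbr Q r y" using y v no_nbr unfolding private_nbr_def by blast
      then show False using no_private by blast
    qed
  qed
  moreover have "set (butlast Q) \<subseteq> set Q" by (auto dest: in_set_butlastD)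
  ultimately show ?thesis
    using Q induced_path_butlast[of Q] induced_path_successively[of Q]
      cop_step_path_cops_butlast[of Q k]
    unfolding guarding_move_def guarding_def by (auto simp: butlast_conv_take)
qed

lemma shift_move:
  assumes Q: "guarding Q r" "length Q = k" and b: "private_nbr Q r b"
  shows "guarding_move Q r (tl Q @ [b])"
proof -
  have Qs: "induced_path Q" "Q \<noteq> []" "set Q \<subseteq> V" "r \<in> V" and r: "r \<notin> closed_nbhd E (set Q)"
    using Q(1) unfolding guarding_def by auto
  have bB: "b \<in> boundary (set Q) r" "E (last Q) b" "\<forall>v\<in>set (butlast Q). \<not> E v b"
    using b unfolding private_nbr_def by auto
  then have "b \<notin> set Q" "b \<in> V"
    using boundary_subset_nbhd[OF r] boundary_subset_V[of "set Q" r] by auto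
  have path: "induced_path (tl Q @ [b])"
  proof (rule induced_path_snoc)
    show "induced_path (tl Q)" using Qs(1) by (rule induced_path_tl)
    show "b \<notin> set (tl Q)" using \<open>b \<notin> set Q\<close> set_tl_subset[of Q] by blast
    show "E (last (tl Q)) b" if "tl Q \<noteq> []" using that bB(2) by (simp add: last_tl)
    show "\<forall>v\<in>set (butlast (tl Q)). \<not> E v b"
      using bB(3) set_tl_subset[of "butlast Q"] by (auto simp: butlast_tl)
  qed
  have "boundary (set Q) r \<subseteq> closed_nbhd E (set (tl Q @ [b]))"
  proof
    fix y assume y: "y \<in> boundary (set Q) r"
    show "y \<in> closed_nbhd E (set (tl Q @ [b]))"
    proof (rule ccontr)
      assume "y \<notin> closed_nbhd E (set (tl Q @ [b]))"
      then have far: "y \<noteq> b" "\<not> E b y" and no_nbr: "\<forall>v\<in>set (tl Q). \<not> E v y"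
        unfolding closed_nbhd_def by auto
      obtain v where "v \<in> set Q" "E v y" using boundary_adjacent_to_path[OF Q(1) y] .
      then have "v = hd Q \<or> v \<in> set (tl Q)" using set_hd_tl[OF Qs(2)] by auto
      then have "E (hd Q) y" using \<open>E v y\<close> no_nbr by blast
      then obtain vs where "hole V E vs" "length Q + 3 \<le> length vs"
        using long_hole_through_boundary[OF Qs r bB y _ no_nbr far] by blast
      then show False using short_holes Q(2) by fastforce
    qed
  qed
  moreover have "set (tl Q @ [b]) \<subseteq> V" using Qs(3) \<open>b \<in> V\<close> set_tl_subset[of Q] by auto
  ultimately show ?thesis
    using path Q(2) Qs bB(1,2) cop_step_path_cops_shift[of Q k b] induced_path_successively[OF Qs(1)]
    unfolding guarding_move_def by auto
qed

lemma guarding_move_exists: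
  assumes "guarding Q r"
  obtains Q' where "guarding_move Q r Q'"
proof (cases "\<exists>b. private_nbr Q r b")
  case True
  then obtain b where b: "private_nbr Q r b" by blast
  have "length Q \<le> k" using assms unfolding guarding_def by blast
  then show thesis
    using extend_move[OF assms _ b] shift_move[OF assms _ b] that by (cases "length Q < k") auto
next
  case False
  have "length Q \<noteq> 1"
  proof
    assume "length Q = 1"
    then obtain b where "private_nbr Q r b" using private_nbr_of_single_vertex[OF assms] by blast
    with False show False by blast
  qed
  moreover have "length Q \<noteq> 0" using assms unfolding guarding_def by simp
  ultimately have "2 \<le> length Q" by linarith
  then show thesis using retract_move[OF assms _ False] that by blast
qed

lemma guarding_move_progress:
  assumes Q: "guarding Q r" and move: "guarding_move Q r Q'"
    and r': "r' = r \<or> E r r'" "r' \<notin> closed_nbhd E (set Q')"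
  shows "guarding Q' r' \<and>
    (k + 1) * card (territory (set Q') r') + length Q' < (k + 1) * card (territory (set Q) r) + length Q"
proof -
  have r: "r \<in> V" "r \<notin> closed_nbhd E (set Q)" using Q unfolding guarding_def by auto
  have guarded: "boundary (set Q) r \<subseteq> closed_nbhd E (set Q')" and "length Q' \<le> k"
    using move unfolding guarding_move_def by auto
  have "r' \<in> V" using r' r(1) edge_in_V by blast
  then have "guarding Q' r'" using move r'(2) unfolding guarding_def guarding_move_def by auto
  have fin: "finite (territory (set Q) r)" using finite_territory[OF r(1)] .
  consider (shorter) "length Q' < length Q" | (occupied) "set Q' \<inter> boundary (set Q) r \<noteq> {}"
    using move unfolding guarding_move_def by blast
  then have "(k + 1) * card (territory (set Q') r') + length Q' < (k + 1) * card (territory (set Q) r) + length Q"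
  proof cases
    case shorter
    have "card (territory (set Q') r') \<le> card (territory (set Q) r)"
      using card_mono[OF fin territory_mono[OF r(2) guarded r']] .
    then have "(k + 1) * card (territory (set Q') r') \<le> (k + 1) * card (territory (set Q) r)"
      by (rule mult_le_mono2)
    then show ?thesis using shorter by linarith
  next
    case occupied
    have "card (territory (set Q') r') < card (territory (set Q) r)"
      using psubset_card_mono[OF fin territory_strict_mono[OF r(2) guarded r' occupied]] .
    then have "(k + 1) * Suc (card (territory (set Q') r')) \<le> (k + 1) * card (territory (set Q) r)"
      by (intro mult_le_mono2) simp
    then show ?thesis using \<open>length Q' \<le> k\<close> by simp
  qed
  with \<open>guarding Q' r'\<close> show ?thesis by blast
qed

theorem cops_win: "cops_win V E k"
proof -
  obtain v where v: "v \<in> V" using simple unfolding finite_simple_graph_def by blast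
  define Inv where "Inv c r \<longleftrightarrow> (\<exists>Q. guarding Q r \<and> c = path_cops k Q)" for c r
  define \<mu> where "\<mu> c r = (k + 1) * card (territory (set c) r) + card (set c)" for c r
  have \<mu>_path: "\<mu> (path_cops k Q) r = (k + 1) * card (territory (set Q) r) + length Q"
    if "guarding Q r" for Q r
    using that set_path_cops[of Q k] distinct_card[of Q]
    unfolding \<mu>_def guarding_def induced_path_def by auto
  have start: "set (path_cops k [v]) = {v}" using set_path_cops[of "[v]" k] k_pos by simp
  show ?thesis
  proof (rule cops_win_by_potential[where C = "path_cops k [v]" and Inv = Inv and \<mu> = \<mu>])
    show "set (path_cops k [v]) \<subseteq> V" using start v by simp
    fix r assume "r \<in> V" "r \<notin> closed_nbhd E (set (path_cops k [v]))"
    then have "guarding [v] r"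
      using start v k_pos edge_irrefl unfolding guarding_def induced_path_def by auto
    then show "Inv (path_cops k [v]) r" unfolding Inv_def by blast
  next
    fix c r assume "Inv c r"
    then obtain Q where Q: "guarding Q r" "c = path_cops k Q" unfolding Inv_def by blast
    obtain Q' where move: "guarding_move Q r Q'" using guarding_move_exists[OF Q(1)] .
    have set_Q': "set (path_cops k Q') = set Q'"
      using move set_path_cops[of Q' k] unfolding guarding_move_def by blast
    show "\<exists>c'. cop_step E c c' \<and> (\<forall>r'. (r' = r \<or> E r r') \<longrightarrow> r' \<notin> closed_nbhd E (set c') \<longrightarrow>
                                       Inv c' r' \<and> \<mu> c' r' < \<mu> c r)"
    proof (intro exI[of _ "path_cops k Q'"] conjI allI impI)
      show "cop_step E c (path_cops k Q')" using move Q(2) unfolding guarding_move_def by blast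
      fix r' assume r': "r' = r \<or> E r r'" "r' \<notin> closed_nbhd E (set (path_cops k Q'))"
      then have "guarding Q' r' \<and> \<mu> (path_cops k Q') r' < \<mu> c r"
        using guarding_move_progress[OF Q(1) move] set_Q' \<mu>_path Q by auto
      then show "Inv (path_cops k Q') r'" "\<mu> (path_cops k Q') r' < \<mu> c r"
        unfolding Inv_def by auto
    qed
  qed simp
qed

end

theorem mainTheorem1:
  fixes V :: "'a set" and E :: "'a \<Rightarrow> 'a \<Rightarrow> bool" and t :: nat
  assumes "t \<ge> 4"
    and "finite_simple_graph V E"
    and "connected_graph V E"
    and "\<not> (\<exists>vs. hole V E vs \<and> length vs \<ge> t)"
  shows "cops_win V E (t - 3) \<and> cop_number V E \<le> t - 3"
proof -
  interpret hole_bounded_graph V E "t - 3"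
    by unfold_locales (use assms in \<open>auto simp: not_le\<close>)
  have "cops_win V E (t - 3)" by (rule cops_win)
  then show ?thesis unfolding cop_number_def by (simp add: Least_le)
qed

end
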